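(* Let $p$ be an odd prime, $x\in\mathbb Z_p$ and $x\not\equiv0\pmod p$. Then $$\sum_{k=0}^{\frac{p-1}2}\binom{2k}k^2\Big(\frac x4\Big)^{2k}\equiv\Big(\frac{-x}p\Big)P_{\frac{p-1}2}\Big(\frac{x+x^{-1}}2\Big)\pmod p.$$
   Context: $\mathbb Z_p$ denotes the set of rational numbers whose denominator (in lowest terms) is prime to $p$; congruences are in this ring. For $a\in\mathbb Z_p$, $\big(\frac ap\big)$ is the Legendre symbol of the residue of $a$ modulo $p$. $P_n(x)$ is the $n$-th Legendre polynomial, defined by $\frac1{\sqrt{1-2xt+t^2}}=\sum_{n\ge0}P_n(x)t^n$, equivalently $P_n(x)=\frac1{2^n}\sum_{k=0}^{[n/2]}\frac{(-1)^k(2n-2k)!}{k!(n-k)!(n-2k)!}x^{n-2k}$. *)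

theory Defs
  imports "HOL-Number_Theory.Number_Theory"
begin

definition in_Zp :: "int \<Rightarrow> rat \<Rightarrow> bool" where
  "in_Zp p a \<longleftrightarrow> coprime (snd (quotient_of a)) p"

definition qcong :: "rat \<Rightarrow> rat \<Rightarrow> int \<Rightarrow> bool" where
  "qcong a b p \<longleftrightarrow> in_Zp p a \<and> in_Zp p b \<and> p dvd fst (quotient_of (a - b))"

definition qres :: "int \<Rightarrow> rat \<Rightarrow> int" where
  "qres p a = (THE r. 0 \<le> r \<and> r < p \<and> [fst (quotient_of a) = r * snd (quotient_of a)] (mod p))"

definition qLegendre :: "rat \<Rightarrow> int \<Rightarrow> int" where
  "qLegendre a p = Legendre (qres p a) p"

definition legendreP :: "nat \<Rightarrow> rat \<Rightarrow> rat" where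
  "legendreP n x = (1 / 2 ^ n) * (\<Sum>k = 0..n div 2.
      of_int ((-1) ^ k) * of_nat (fact (2*n - 2*k)) /
      of_nat (fact k * fact (n - k) * fact (n - 2*k)) * x ^ (n - 2*k))"

end

theory Submission
  imports Defs "HOL-Computational_Algebra.Polynomial"
begin

text \<open>
  Let \<open>n = (p - 1)/2\<close> and let \<open>c\<close> be the residue of \<open>x\<close>. For \<open>m > 0\<close> the power sum
  \<open>\<Sum>\<^sub>z z^m\<close> over the residues is \<open>-1\<close> or \<open>0\<close> according as \<open>p - 1\<close> divides \<open>m\<close> or not, so by
  Euler's criterion \<open>\<Sum>\<^sub>z ((z g(z))/p) \<equiv> -[z^n] g^n\<close> for every quadratic polynomial \<open>g\<close>.

  Since \<open>(2k choose k) \<equiv> (-4)^k (n choose k)\<close>, the left-hand side is \<open>\<Sum>\<^sub>k (n choose k)^2 c^(2k)\<close>,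
  the coefficient of \<open>z^n\<close> in \<open>((1 + z)(c^2 + z))^n\<close>; hence it is \<open>-\<Sum>\<^sub>z (z(z^2 + Az + B)/p)\<close>
  with \<open>A = 1 + c^2\<close>, \<open>B = c^2\<close>. Likewise \<open>2^n P\<^sub>n(t)\<close> is the coefficient of \<open>s^n\<close> in
  \<open>((s + t)^2 - 1)^n\<close>, hence \<open>\<equiv> -\<Sum>\<^sub>s (s((s + t)^2 - 1)/p)\<close>. For \<open>t = (c + 1/c)/2\<close> the substitution
  \<open>s = l u\<close> with \<open>l = -1/(2c)\<close> gives \<open>s((s + t)^2 - 1) = l^3 u(u^2 - 2Au + A^2 - 4B)\<close>, and
  \<open>((-c)/p) 2^(-n) (l/p) \<equiv> 1\<close> by Euler's criterion, so the right-hand side is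
  \<open>-\<Sum>\<^sub>u (u(u^2 - 2Au + A^2 - 4B)/p)\<close>. The two cubic character sums coincide because the cubics
  are related by a 2-isogeny.
\<close>

section \<open>Legendre polynomials and binomial coefficients\<close>

lemma Suc_times_binomial_Suc: "Suc k * (m choose Suc k) = (m - k) * (m choose k)"
  using binomial_absorption[of k m] binomial_absorb_comp[of m k] by simp

lemma Suc_times_central_binomial: "Suc k * (2 * Suc k choose Suc k) = 2 * (2 * k + 1) * (2 * k choose k)"
proof -
  have "Suc k * (2 * Suc k choose Suc k) = 2 * (Suc k * (Suc (2 * k) choose k))"
    using Suc_times_binomial[of k "Suc (2 * k)"] by simp
  also have "Suc k * (Suc (2 * k) choose k) = (2 * k + 1) * (2 * k choose k)"
    using binomial_absorb_comp[of "Suc (2 * k)" k] by (simp add: Suc_diff_le)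
  finally show ?thesis
    by simp
qed

definition scaled_legendre :: "nat \<Rightarrow> 'a::comm_ring_1 \<Rightarrow> 'a" where
  "scaled_legendre n t =
     (\<Sum>k = 0..n div 2. (-1) ^ k * of_nat ((n choose k) * (2 * n - 2 * k choose n)) * t ^ (n - 2 * k))"

lemma fact_quotient_eq_binomials:
  assumes "k \<le> n div 2"
  shows "fact (2 * n - 2 * k) = fact k * fact (n - k) * fact (n - 2 * k) * ((n choose k) * (2 * n - 2 * k choose n))"
proof -
  have "fact (2 * n - 2 * k) = fact n * fact (n - 2 * k) * (2 * n - 2 * k choose n)"
    using binomial_fact_lemma[of n "2 * n - 2 * k"] assms by (simp add: diff_diff_left)
  also have "fact n = fact k * fact (n - k) * (n choose k)"
    using binomial_fact_lemma[of k n] assms by simp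
  finally show ?thesis
    by (simp only: ac_simps)
qed

lemma legendreP_eq_scaled_legendre: "legendreP n t = scaled_legendre n t / 2 ^ n"
proof -
  have "(\<Sum>k = 0..n div 2. of_int ((-1) ^ k) * of_nat (fact (2 * n - 2 * k)) /
          of_nat (fact k * fact (n - k) * fact (n - 2 * k)) * t ^ (n - 2 * k))
      = (\<Sum>k = 0..n div 2. (-1) ^ k * of_nat ((n choose k) * (2 * n - 2 * k choose n)) * t ^ (n - 2 * k))"
  proof (rule sum.cong[OF refl])
    fix k :: nat assume k: "k \<in> {0..n div 2}"
    have "(of_nat (fact (2 * n - 2 * k)) / of_nat (fact k * fact (n - k) * fact (n - 2 * k)) :: rat)
        = of_nat ((n choose k) * (2 * n - 2 * k choose n))"
      using fact_quotient_eq_binomials[of k n] k by (simp add: field_simps)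
    thus "of_int ((-1) ^ k) * of_nat (fact (2 * n - 2 * k)) / of_nat (fact k * fact (n - k) * fact (n - 2 * k)) * t ^ (n - 2 * k)
        = (-1) ^ k * of_nat ((n choose k) * (2 * n - 2 * k choose n)) * t ^ (n - 2 * k)"
      by (simp only: times_divide_eq_right[symmetric]) simp
  qed
  thus ?thesis
    unfolding legendreP_def scaled_legendre_def by simp
qed

lemma coeff_linear_power: "coeff ([:a, 1:] ^ m) j = of_nat (m choose j) * a ^ (m - j)"
proof (cases "j \<le> m")
  case True
  thus ?thesis
    by (simp add: coeff_linear_poly_power)
next
  case False
  thus ?thesis
    using degree_linear_power[of a m] by (simp add: coeff_eq_0 binomial_eq_0)
qed

lemma coeff_scaled_legendre_poly:
  fixes t :: "'a::comm_ring_1"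
  shows "coeff (([:t, 1:] ^ 2 - 1) ^ n) n = scaled_legendre n t"
proof -
  have "of_nat c * (-1) ^ k * Y = smult (of_nat c * (-1) ^ k) Y" for c k and Y :: "'a poly"
    by (cases "even k") (simp_all add: of_nat_poly)
  hence "([:t, 1:] ^ 2 - 1) ^ n = (\<Sum>k\<le>n. smult (of_nat (n choose k) * (-1) ^ k) ([:t, 1:] ^ (2 * (n - k))))"
    using binomial_ring[of "-1" "[:t, 1:] ^ 2" n] by (simp add: power_mult)
  hence "coeff (([:t, 1:] ^ 2 - 1) ^ n) n
      = (\<Sum>k\<le>n. of_nat (n choose k) * (-1) ^ k * (of_nat (2 * (n - k) choose n) * t ^ (2 * (n - k) - n)))"
    by (simp add: coeff_sum coeff_linear_power)
  also have "\<dots> = (\<Sum>k = 0..n div 2. of_nat (n choose k) * (-1) ^ k * (of_nat (2 * (n - k) choose n) * t ^ (2 * (n - k) - n)))"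
  proof (rule sum.mono_neutral_right)
    show "\<forall>k\<in>{..n} - {0..n div 2}. of_nat (n choose k) * (-1) ^ k * (of_nat (2 * (n - k) choose n) * t ^ (2 * (n - k) - n)) = 0"
    proof
      fix k assume "k \<in> {..n} - {0..n div 2}"
      hence "2 * (n - k) < n"
        by auto
      thus "of_nat (n choose k) * (-1) ^ k * (of_nat (2 * (n - k) choose n) * t ^ (2 * (n - k) - n)) = 0"
        by (simp add: binomial_eq_0)
    qed
  qed auto
  also have "\<dots> = scaled_legendre n t"
    unfolding scaled_legendre_def by (intro sum.cong refl) (auto simp: algebra_simps)
  finally show ?thesis .
qed

lemma coeff_binomial_square_poly:
  fixes a :: "'a::comm_semiring_1"
  shows "coeff (([:1, 1:] * [:a, 1:]) ^ n) n = (\<Sum>k\<le>n. of_nat (n choose k) ^ 2 * a ^ k)"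
proof -
  have "coeff (([:1, 1:] * [:a, 1:]) ^ n) n = (\<Sum>k\<le>n. of_nat (n choose k) * (of_nat (n choose (n - k)) * a ^ k))"
    unfolding power_mult_distrib coeff_mult by (intro sum.cong refl) (simp add: coeff_linear_power)
  thus ?thesis
    by (simp add: binomial_symmetric[symmetric] power2_eq_square mult.assoc)
qed

section \<open>Reduction of \<open>p\<close>-integral rationals\<close>

text \<open>A relational form of \<open>qres\<close>: unlike the residue itself, it is compatible with the ring operations
  for arbitrary integer representatives.\<close>

definition reduces_mod :: "int \<Rightarrow> rat \<Rightarrow> int \<Rightarrow> bool" where
  "reduces_mod p r a \<longleftrightarrow> (\<exists>u v. r = of_int u / of_int v \<and> \<not> p dvd v \<and> [u = a * v] (mod p))"

locale prime_modulus =
  fixes p :: int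
  assumes prime: "prime p"
begin

lemma coprime_if_not_dvd: "\<not> p dvd d \<Longrightarrow> coprime d p"
  using prime prime_imp_coprime coprime_commute by blast

lemma not_dvd_mult: "\<not> p dvd a \<Longrightarrow> \<not> p dvd b \<Longrightarrow> \<not> p dvd a * b"
  using prime by (simp add: prime_dvd_mult_iff)

lemma not_dvd_one: "\<not> p dvd 1"
  by (meson not_prime_unit prime)

lemma exists_inverse_mod: "\<not> p dvd a \<Longrightarrow> \<exists>b. [a * b = 1] (mod p)"
  using cong_solve_coprime_int coprime_if_not_dvd by blast

lemma not_dvd_if_inverse: "[a * b = 1] (mod p) \<Longrightarrow> \<not> p dvd a"
  using cong_dvd_iff not_dvd_one by fastforce

lemma reduces_mod_of_int: "reduces_mod p (of_int k) k"
  unfolding reduces_mod_def using not_dvd_one by (intro exI[of _ k] exI[of _ 1]) auto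

lemma reduces_mod_of_nat: "reduces_mod p (of_nat k) (int k)"
  using reduces_mod_of_int[of "int k"] by simp

lemma reduces_mod_numeral: "reduces_mod p (numeral k) (numeral k)"
  using reduces_mod_of_int[of "numeral k"] by simp

lemma reduces_mod_0: "reduces_mod p 0 0" and reduces_mod_1: "reduces_mod p 1 1"
  using reduces_mod_of_int[of 0] reduces_mod_of_int[of 1] by simp_all

lemma reduces_mod_add:
  assumes "reduces_mod p r a" "reduces_mod p s b"
  shows "reduces_mod p (r + s) (a + b)"
proof -
  obtain u v where r: "r = of_int u / of_int v" "\<not> p dvd v" "[u = a * v] (mod p)"
    using assms(1) reduces_mod_def by auto
  obtain u' v' where s: "s = of_int u' / of_int v'" "\<not> p dvd v'" "[u' = b * v'] (mod p)"
    using assms(2) reduces_mod_def by auto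
  have "v \<noteq> 0" "v' \<noteq> 0"
    using r(2) s(2) by auto
  hence "r + s = of_int (u * v' + u' * v) / of_int (v * v')"
    using r(1) s(1) by (simp add: field_simps)
  moreover have "[u * v' + u' * v = (a + b) * (v * v')] (mod p)"
    using cong_add[OF cong_scalar_right[OF r(3), of v'] cong_scalar_right[OF s(3), of v]]
    by (simp add: algebra_simps)
  ultimately show ?thesis
    unfolding reduces_mod_def using not_dvd_mult r(2) s(2) by blast
qed

lemma reduces_mod_mult:
  assumes "reduces_mod p r a" "reduces_mod p s b"
  shows "reduces_mod p (r * s) (a * b)"
proof -
  obtain u v where r: "r = of_int u / of_int v" "\<not> p dvd v" "[u = a * v] (mod p)"
    using assms(1) reduces_mod_def by auto
  obtain u' v' where s: "s = of_int u' / of_int v'" "\<not> p dvd v'" "[u' = b * v'] (mod p)"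
    using assms(2) reduces_mod_def by auto
  have "r * s = of_int (u * u') / of_int (v * v')"
    using r s by simp
  moreover have "[u * u' = (a * b) * (v * v')] (mod p)"
    using cong_mult[OF r(3) s(3)] by (simp add: ac_simps)
  ultimately show ?thesis
    unfolding reduces_mod_def using not_dvd_mult r(2) s(2) by blast
qed

lemma reduces_mod_uminus: "reduces_mod p r a \<Longrightarrow> reduces_mod p (- r) (- a)"
  using reduces_mod_mult[OF reduces_mod_of_int[of "-1"]] by simp

lemma reduces_mod_diff:
  "reduces_mod p r a \<Longrightarrow> reduces_mod p s b \<Longrightarrow> reduces_mod p (r - s) (a - b)"
  using reduces_mod_add[of r a "- s" "- b"] reduces_mod_uminus by simp

lemma reduces_mod_power: "reduces_mod p r a \<Longrightarrow> reduces_mod p (r ^ k) (a ^ k)"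
  by (induction k) (simp_all add: reduces_mod_1 reduces_mod_mult)

lemma reduces_mod_sum:
  "(\<And>i. i \<in> A \<Longrightarrow> reduces_mod p (f i) (g i)) \<Longrightarrow>
     reduces_mod p (\<Sum>i\<in>A. f i) (\<Sum>i\<in>A. g i)"
  by (induction A rule: infinite_finite_induct) (simp_all add: reduces_mod_0 reduces_mod_add)

lemma reduces_mod_cong:
  assumes "reduces_mod p r a" "[a = b] (mod p)"
  shows "reduces_mod p r b"
proof -
  obtain u v where uv: "r = of_int u / of_int v" "\<not> p dvd v" "[u = a * v] (mod p)"
    using assms(1) reduces_mod_def by auto
  have "[u = b * v] (mod p)"
    using cong_trans[OF uv(3) cong_scalar_right[OF assms(2)]] .
  thus ?thesis
    unfolding reduces_mod_def using uv(1,2) by blast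
qed

lemma reduces_mod_inverse:
  assumes r: "reduces_mod p r a" and ab: "[a * b = 1] (mod p)"
  shows "reduces_mod p (inverse r) b"
proof -
  obtain u v where uv: "r = of_int u / of_int v" "\<not> p dvd v" "[u = a * v] (mod p)"
    using r reduces_mod_def by auto
  have "\<not> p dvd a * v"
    using not_dvd_mult not_dvd_if_inverse[OF ab] uv(2) by blast
  hence u: "\<not> p dvd u"
    using uv(3) cong_dvd_iff by blast
  have "[b * u = (a * b) * v] (mod p)"
    using cong_scalar_left[OF uv(3), of b] by (simp add: ac_simps)
  also have "[(a * b) * v = 1 * v] (mod p)"
    using ab by (rule cong_scalar_right)
  finally have "[v = b * u] (mod p)"
    by (simp add: cong_sym_eq)
  moreover have "inverse r = of_int v / of_int u"
    using uv(1) by simp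
  ultimately show ?thesis
    unfolding reduces_mod_def using u by blast
qed

lemma reduces_mod_unique:
  assumes "reduces_mod p r a" "reduces_mod p r b"
  shows "[a = b] (mod p)"
proof -
  obtain u v where r: "r = of_int u / of_int v" "\<not> p dvd v" "[u = a * v] (mod p)"
    using assms(1) reduces_mod_def by auto
  obtain u' v' where r': "r = of_int u' / of_int v'" "\<not> p dvd v'" "[u' = b * v'] (mod p)"
    using assms(2) reduces_mod_def by auto
  have "v \<noteq> 0" "v' \<noteq> 0"
    using r(2) r'(2) by auto
  hence "rat_of_int (u * v') = of_int (u' * v)"
    using r(1) r'(1) by (simp add: field_simps)
  hence "u * v' = u' * v"
    by (simp only: of_int_eq_iff)
  moreover have "[u * v' = a * (v * v')] (mod p)" "[u' * v = b * (v * v')] (mod p)"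
    using cong_scalar_right[OF r(3), of v'] cong_scalar_right[OF r'(3), of v]
    by (simp_all add: ac_simps)
  ultimately have "[a * (v * v') = b * (v * v')] (mod p)"
    by (metis cong_sym cong_trans)
  thus ?thesis
    using cong_mult_rcancel coprime_if_not_dvd not_dvd_mult r(2) r'(2) by blast
qed

lemma reduces_mod_quotient_of:
  assumes r: "reduces_mod p r a" and q: "quotient_of r = (m, d)"
  shows "[m = a * d] (mod p)" "\<not> p dvd d"
proof -
  obtain u v where uv: "r = of_int u / of_int v" "\<not> p dvd v" "[u = a * v] (mod p)"
    using r reduces_mod_def by auto
  have "of_int m / of_int d = (of_int u / of_int v :: rat)"
    using uv quotient_of_div[OF q] by simp
  hence "rat_of_int (m * v) = of_int (u * d)"
    using uv(2) quotient_of_denom_pos[OF q] by (auto simp: field_simps)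
  hence md: "m * v = u * d"
    by (simp only: of_int_eq_iff)
  hence "d dvd m * v"
    by simp
  hence "d dvd v"
    using quotient_of_coprime[OF q] by (meson coprime_commute coprime_dvd_mult_right_iff)
  thus "\<not> p dvd d"
    using uv(2) dvd_trans by blast
  have "[m * v = (a * d) * v] (mod p)"
    using cong_scalar_right[OF uv(3), of d] md by (simp add: ac_simps)
  thus "[m = a * d] (mod p)"
    using cong_mult_rcancel coprime_if_not_dvd uv(2) by blast
qed

lemma in_Zp_iff_reduces_mod: "in_Zp p r \<longleftrightarrow> (\<exists>a. reduces_mod p r a)"
proof
  obtain m d where q: "quotient_of r = (m, d)"
    by (cases "quotient_of r") auto
  {
    assume "in_Zp p r"
    hence "coprime d p"
      using q unfolding in_Zp_def by simp
    then obtain d' where d': "[d * d' = 1] (mod p)"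
      using cong_solve_coprime_int by blast
    have "[m * (d * d') = m * 1] (mod p)"
      using d' by (intro cong_mult) auto
    hence "[m = (m * d') * d] (mod p)"
      by (simp add: algebra_simps cong_sym_eq)
    thus "\<exists>a. reduces_mod p r a"
      using quotient_of_div[OF q] not_dvd_if_inverse[OF d'] unfolding reduces_mod_def by blast
  next
    assume "\<exists>a. reduces_mod p r a"
    then obtain a where "reduces_mod p r a" ..
    hence "coprime d p"
      using reduces_mod_quotient_of(2)[OF _ q] coprime_if_not_dvd by blast
    thus "in_Zp p r"
      unfolding in_Zp_def q by simp
  }
qed

lemma qcong_if_reduces_mod:
  assumes "reduces_mod p r a" "reduces_mod p s b" "[a = b] (mod p)"
  shows "qcong r s p"
proof -
  obtain m d where q: "quotient_of (r - s) = (m, d)"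
    by (cases "quotient_of (r - s)") auto
  have "reduces_mod p (r - s) 0"
    using reduces_mod_diff[OF assms(1,2)] assms(3) reduces_mod_cong
    by (simp add: cong_iff_dvd_diff cong_0_iff)
  hence "p dvd m"
    using reduces_mod_quotient_of(1)[OF _ q] cong_0_iff by fastforce
  moreover have "in_Zp p r" "in_Zp p s"
    using assms(1,2) in_Zp_iff_reduces_mod by blast+
  ultimately show ?thesis
    unfolding qcong_def q by simp
qed

lemma qres_eq_mod:
  assumes r: "reduces_mod p r a"
  shows "qres p r = a mod p"
proof -
  obtain m d where q: "quotient_of r = (m, d)"
    by (cases "quotient_of r") auto
  note md = reduces_mod_quotient_of[OF r q]
  have p0: "p > 0"
    using prime prime_gt_0_int by blast
  have mod_d: "[a mod p * d = a * d] (mod p)"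
    by (simp add: cong_def mod_mult_left_eq)
  show ?thesis
    unfolding qres_def q fst_conv snd_conv
  proof (rule the_equality)
    have "[m = a mod p * d] (mod p)"
      using cong_trans[OF md(1) cong_sym[OF mod_d]] .
    thus "0 \<le> a mod p \<and> a mod p < p \<and> [m = a mod p * d] (mod p)"
      using p0 by simp
  next
    fix r' assume r': "0 \<le> r' \<and> r' < p \<and> [m = r' * d] (mod p)"
    hence "[r' * d = a mod p * d] (mod p)"
      using cong_trans[OF cong_sym cong_trans[OF md(1) cong_sym[OF mod_d]]] by blast
    hence "[r' = a mod p] (mod p)"
      using cong_mult_rcancel coprime_if_not_dvd md(2) by blast
    thus "r' = a mod p"
      using r' p0 cong_less_imp_eq_int by auto
  qed
qed

lemma reduces_mod_scaled_legendre:
  "reduces_mod p t T \<Longrightarrow> reduces_mod p (scaled_legendre n t) (scaled_legendre n T)"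
  unfolding scaled_legendre_def
  by (intro reduces_mod_sum reduces_mod_mult reduces_mod_power reduces_mod_of_int[of "-1", simplified]
        reduces_mod_of_nat[simplified])

lemma sum_residues_affine_reindex:
  assumes "\<not> p dvd l"
  shows "(\<Sum>z\<in>{0..<p}. F z) = (\<Sum>z\<in>{0..<p}. F ((l * z + m) mod p))"
proof -
  define h where "h z = (l * z + m) mod p" for z
  have p0: "p > 0"
    using prime prime_gt_0_int by blast
  have "inj_on h {0..<p}"
  proof (rule inj_onI)
    fix z z' assume z: "z \<in> {0..<p}" "z' \<in> {0..<p}" and "h z = h z'"
    hence "[l * z + m = l * z' + m] (mod p)"
      unfolding h_def cong_def by simp
    hence "[z = z'] (mod p)"
      using cong_add_rcancel cong_mult_lcancel coprime_if_not_dvd assms by blast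
    thus "z = z'"
      using z cong_less_imp_eq_int by auto
  qed
  moreover have "h ` {0..<p} \<subseteq> {0..<p}"
    unfolding h_def using p0 by auto
  ultimately have "bij_betw h {0..<p} {0..<p}"
    by (simp add: bij_betw_def card_image card_subset_eq)
  thus ?thesis
    unfolding h_def by (rule sum.reindex_bij_betw[symmetric])
qed

end

section \<open>Legendre symbols and power sums modulo an odd prime\<close>

locale odd_prime = prime_modulus +
  fixes n :: nat
  assumes p_eq: "p = 2 * int n + 1"
begin

lemma n_pos: "n \<ge> 1"
  using prime_ge_2_int[OF prime] p_eq by linarith

lemma p_gt_2: "p > 2"
  using n_pos p_eq by linarith

lemma not_dvd_2: "\<not> p dvd 2"
  using p_gt_2 zdvd_not_zless by fastforce

lemma not_dvd_4: "\<not> p dvd 4"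
  using not_dvd_mult[OF not_dvd_2 not_dvd_2] by simp

lemma residues_split_0: "{0..<p} = insert 0 {1..<p}"
  using p_gt_2 by auto

lemma Legendre_cong_power: "[Legendre a p = a ^ n] (mod p)"
proof -
  have "prime (nat p)"
    using prime by (simp add: prime_nat_iff_prime)
  moreover have "2 < nat p" "int (nat p) = p" "(nat p - 1) div 2 = n"
    using p_gt_2 p_eq by (simp_all add: nat_add_distrib nat_mult_distrib)
  ultimately show ?thesis
    using euler_criterion[of "nat p" a] by simp
qed

lemma Legendre_cong:
  assumes "[a = b] (mod p)"
  shows "Legendre a p = Legendre b p"
proof -
  have "[a = c] (mod p) \<longleftrightarrow> [b = c] (mod p)" "[c = a] (mod p) \<longleftrightarrow> [c = b] (mod p)" for c
    using assms cong_sym cong_trans by blast+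
  thus ?thesis
    unfolding Legendre_def QuadRes_def by simp
qed

lemma Legendre_mod: "Legendre (a mod p) p = Legendre a p"
  by (rule Legendre_cong) (simp add: cong_def)

lemma Legendre_values: "Legendre a p \<in> {-1, 0, 1}"
  unfolding Legendre_def by auto

lemma Legendre_eq_0_iff: "Legendre a p = 0 \<longleftrightarrow> p dvd a"
  unfolding Legendre_def by (simp add: cong_0_iff)

lemma Legendre_square: "\<not> p dvd a \<Longrightarrow> Legendre a p ^ 2 = 1"
  using Legendre_values[of a] Legendre_eq_0_iff[of a] by auto

lemma sign_eq_if_cong:
  assumes "x \<in> {-1, 0, 1}" "y \<in> {-1, 0, 1}" "[x = y] (mod p)"
  shows "x = y"
proof (rule ccontr)
  assume "x \<noteq> y"
  moreover have "p dvd x - y"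
    using assms(3) cong_iff_dvd_diff by blast
  ultimately have "\<bar>p\<bar> \<le> \<bar>x - y\<bar>"
    using dvd_imp_le_int by simp
  thus False
    using assms(1,2) p_gt_2 by auto
qed

lemma Legendre_mult: "Legendre (a * b) p = Legendre a p * Legendre b p"
proof (rule sign_eq_if_cong)
  show "Legendre a p * Legendre b p \<in> {-1, 0, 1}"
    using Legendre_values[of a] Legendre_values[of b] by auto
  have "[Legendre (a * b) p = a ^ n * b ^ n] (mod p)"
    using Legendre_cong_power[of "a * b"] by (simp add: power_mult_distrib)
  moreover have "[Legendre a p * Legendre b p = a ^ n * b ^ n] (mod p)"
    using Legendre_cong_power by (intro cong_mult)
  ultimately show "[Legendre (a * b) p = Legendre a p * Legendre b p] (mod p)"
    using cong_sym cong_trans by blast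
qed (rule Legendre_values)

lemma Legendre_square_mult: "\<not> p dvd a \<Longrightarrow> Legendre (a * a * b) p = Legendre b p"
  using Legendre_square[of a] by (simp add: Legendre_mult power2_eq_square)

lemma power_2n_cong_1: "\<not> p dvd a \<Longrightarrow> [a ^ (2 * n) = 1] (mod p)"
  using cong_pow[OF cong_sym[OF Legendre_cong_power[of a]], of 2] Legendre_square[of a]
  by (simp add: power_mult mult.commute)

lemma exists_power_not_cong_1:
  assumes "\<not> 2 * n dvd m"
  obtains g where "\<not> p dvd g" "\<not> [g ^ m = 1] (mod p)"
proof -
  obtain g where g: "g \<in> totatives (nat p)" "ord (nat p) g = nat p - 1"
    using residue_prime_has_primroot prime prime_nat_iff_prime by blast
  have "nat p - 1 = 2 * n"
    using p_eq by (simp add: nat_add_distrib nat_mult_distrib)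
  hence "\<not> [g ^ m = 1] (mod nat p)"
    using assms g(2) ord_divides by auto
  hence "\<not> [int g ^ m = 1] (mod p)"
    using cong_int_iff[of "g ^ m" 1 "nat p"] p_gt_2 by simp
  moreover have "coprime (nat p) g"
    using g(1) by (simp add: totatives_def coprime_commute)
  hence "coprime p (int g)"
    using p_gt_2 coprime_int_iff[of "nat p" g] by simp
  hence "\<not> p dvd int g"
    by (metis coprime_common_divisor dvd_refl not_prime_unit prime)
  ultimately show ?thesis
    using that by blast
qed

lemma sum_residues_power:
  assumes "m > 0"
  shows "[(\<Sum>z\<in>{0..<p}. z ^ m) = (if 2 * n dvd m then -1 else 0)] (mod p)"
proof (cases "2 * n dvd m")
  case True
  then obtain q where m: "m = 2 * n * q"
    by blast
  have "(\<Sum>z\<in>{0..<p}. z ^ m) = (\<Sum>z\<in>{1..<p}. z ^ m)"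
    using assms residues_split_0 by simp
  also have "[\<dots> = (\<Sum>z\<in>{1..<p}. 1)] (mod p)"
  proof (rule cong_sum)
    fix z assume "z \<in> {1..<p}"
    hence "\<not> p dvd z"
      using zdvd_not_zless by auto
    thus "[z ^ m = 1] (mod p)"
      using cong_pow[OF power_2n_cong_1, of z q] by (simp add: m power_mult)
  qed
  also have "(\<Sum>z\<in>{1..<p}. 1) = p - 1"
    using p_gt_2 by simp
  also have "[p - 1 = -1] (mod p)"
    by (simp add: cong_iff_dvd_diff)
  finally show ?thesis
    using True by simp
next
  case False
  then obtain g where g: "\<not> p dvd g" "\<not> [g ^ m = 1] (mod p)"
    by (rule exists_power_not_cong_1)
  define S where "S = (\<Sum>z\<in>{0..<p}. z ^ m)"
  text \<open>Multiplication by \<open>g\<close> permutes the residues, so \<open>S \<equiv> g^m S\<close>.\<close>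
  have "[S = (\<Sum>z\<in>{0..<p}. z ^ m mod p)] (mod p)"
    unfolding S_def by (simp add: cong_def mod_sum_eq)
  also have "(\<Sum>z\<in>{0..<p}. z ^ m mod p) = (\<Sum>z\<in>{0..<p}. ((g * z + 0) mod p) ^ m mod p)"
    using g(1) by (rule sum_residues_affine_reindex)
  also have "\<dots> = (\<Sum>z\<in>{0..<p}. (g * z) ^ m mod p)"
    by (simp add: power_mod)
  also have "[\<dots> = (\<Sum>z\<in>{0..<p}. (g * z) ^ m)] (mod p)"
    by (simp add: cong_def mod_sum_eq)
  also have "(\<Sum>z\<in>{0..<p}. (g * z) ^ m) = g ^ m * S"
    unfolding S_def by (simp add: power_mult_distrib sum_distrib_left)
  finally have "p dvd (g ^ m - 1) * S"
    by (simp add: cong_iff_dvd_diff algebra_simps dvd_diff_commute)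
  moreover have "\<not> p dvd g ^ m - 1"
    using g(2) by (simp add: cong_iff_dvd_diff)
  ultimately have "p dvd S"
    using prime prime_dvd_mult_iff by blast
  thus ?thesis
    using False unfolding S_def by (simp add: cong_0_iff)
qed

lemma sum_residues_poly_cong_coeff:
  fixes f :: "int poly"
  assumes "degree f \<le> 2 * n"
  shows "[(\<Sum>z\<in>{0..<p}. z ^ n * poly f z) = - coeff f n] (mod p)"
proof -
  have shift: "2 * n dvd n + i \<longleftrightarrow> i = n" if "i \<le> 2 * n" for i
  proof
    assume "2 * n dvd n + i"
    then obtain q where q: "n + i = 2 * n * q" ..
    have "q \<noteq> 0"
      using q n_pos by (cases "q = 0") auto
    moreover have "q < 2"
    proof (rule ccontr)
      assume "\<not> q < 2"
      hence "2 * n * 2 \<le> 2 * n * q"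
        by simp
      thus False
        using q that n_pos by linarith
    qed
    ultimately show "i = n"
      using q by (simp add: less_2_cases_iff)
  qed (simp add: mult_2)
  have "poly f z = (\<Sum>i\<le>2 * n. coeff f i * z ^ i)" for z
    using assms by (simp add: poly_altdef sum.mono_neutral_left coeff_eq_0)
  hence "(\<Sum>z\<in>{0..<p}. z ^ n * poly f z) = (\<Sum>i\<le>2 * n. coeff f i * (\<Sum>z\<in>{0..<p}. z ^ (n + i)))"
    by (simp add: sum_distrib_left power_add algebra_simps sum.swap[of _ "{0..<p}"])
  also have "[\<dots> = (\<Sum>i\<le>2 * n. coeff f i * (if i = n then -1 else 0))] (mod p)"
  proof (intro cong_sum cong_mult cong_refl)
    fix i assume "i \<in> {..2 * n}"
    thus "[(\<Sum>z\<in>{0..<p}. z ^ (n + i)) = (if i = n then -1 else 0)] (mod p)"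
      using sum_residues_power[of "n + i"] shift[of i] n_pos by simp
  qed
  also have "(\<Sum>i\<le>2 * n. coeff f i * (if i = n then -1 else 0)) = - coeff f n"
    by (simp add: if_distrib[of "\<lambda>x. coeff f _ * x"] cong: if_cong)
  finally show ?thesis .
qed

lemma sum_Legendre_cong_coeff_power:
  fixes g :: "int poly"
  assumes "degree g \<le> 2"
  shows "[(\<Sum>z\<in>{0..<p}. Legendre (z * poly g z) p) = - coeff (g ^ n) n] (mod p)"
proof -
  have "[(\<Sum>z\<in>{0..<p}. Legendre (z * poly g z) p) = (\<Sum>z\<in>{0..<p}. z ^ n * poly (g ^ n) z)] (mod p)"
    by (intro cong_sum) (simp only: poly_power power_mult_distrib[symmetric] Legendre_cong_power)
  also have "[(\<Sum>z\<in>{0..<p}. z ^ n * poly (g ^ n) z) = - coeff (g ^ n) n] (mod p)"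
    using order_trans[OF degree_power_le mult_le_mono1[OF assms]]
    by (rule sum_residues_poly_cong_coeff)
  finally show ?thesis .
qed

text \<open>Since \<open>n \<equiv> -1/2\<close>, this is \<open>(n choose k) \<equiv> (-1/2 gchoose k) = (2k choose k)/(-4)^k\<close>.\<close>

lemma central_binomial_cong:
  "k \<le> n \<Longrightarrow> [int (2 * k choose k) = (-4) ^ k * int (n choose k)] (mod p)"
proof (induction k)
  case 0
  then show ?case by simp
next
  case (Suc k)
  define C where "C = int (2 * k choose k)"
  define B where "B = int (n choose k)"
  have IH: "[C = (-4) ^ k * B] (mod p)"
    using Suc unfolding C_def B_def by simp
  have "int (Suc k) * int (2 * Suc k choose Suc k) = int (2 * (2 * k + 1) * (2 * k choose k))"
    by (simp only: of_nat_mult[symmetric] Suc_times_central_binomial)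
  also have "\<dots> = 2 * (2 * int k + 1) * C"
    unfolding C_def by (simp add: algebra_simps)
  also have "[\<dots> = 2 * (2 * int k + 1) * ((-4) ^ k * B)] (mod p)"
    using IH by (rule cong_scalar_left)
  also have "2 * (2 * int k + 1) * ((-4) ^ k * B) = (-4) ^ Suc k * ((int n - int k) * B) + p * (2 * (-4) ^ k * B)"
    using p_eq by (simp add: algebra_simps)
  also have "[\<dots> = (-4) ^ Suc k * ((int n - int k) * B)] (mod p)"
    by (simp add: cong_iff_dvd_diff)
  also have "(int n - int k) * B = int (Suc k) * int (n choose Suc k)"
    unfolding B_def using arg_cong[OF Suc_times_binomial_Suc[of k n], of int] Suc.prems
    by (simp add: of_nat_diff algebra_simps)
  finally have "[int (Suc k) * int (2 * Suc k choose Suc k) = int (Suc k) * ((-4) ^ Suc k * int (n choose Suc k))] (mod p)"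
    by (simp add: ac_simps)
  moreover have "\<not> p dvd int (Suc k)"
    using Suc.prems p_eq by (simp add: zdvd_not_zless)
  ultimately show ?case
    using cong_mult_lcancel coprime_if_not_dvd by blast
qed

section \<open>Cubic character sums\<close>

definition cubic_character_sum :: "int \<Rightarrow> int \<Rightarrow> int" where
  "cubic_character_sum A B = (\<Sum>u\<in>{0..<p}. Legendre (u * (u ^ 2 + A * u + B)) p)"

lemma sum_Legendre_residues: "(\<Sum>w\<in>{0..<p}. Legendre w p) = 0"
proof -
  define S where "S = (\<Sum>w\<in>{0..<p}. Legendre w p)"
  have "[S = (\<Sum>w\<in>{0..<p}. w ^ n)] (mod p)"
    unfolding S_def by (intro cong_sum Legendre_cong_power)
  also have "[(\<Sum>w\<in>{0..<p}. w ^ n) = 0] (mod p)"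
    using sum_residues_power[of n] n_pos by (auto dest: dvd_imp_le)
  finally have "p dvd S"
    by (simp add: cong_0_iff)
  have "S = (\<Sum>w\<in>{1..<p}. Legendre w p)"
    unfolding S_def residues_split_0 using Legendre_eq_0_iff[of 0] by simp
  hence "\<bar>S\<bar> \<le> (\<Sum>w\<in>{1..<p}. \<bar>Legendre w p\<bar>)"
    by (simp only: sum_abs)
  also have "\<dots> \<le> (\<Sum>w\<in>{1..<p}. 1)"
  proof (rule sum_mono)
    fix w show "\<bar>Legendre w p\<bar> \<le> 1"
      using Legendre_values[of w] by auto
  qed
  also have "\<dots> < \<bar>p\<bar>"
    using p_gt_2 by simp
  finally have "\<not> \<bar>p\<bar> \<le> \<bar>S\<bar>"
    by simp
  thus ?thesis
    using \<open>p dvd S\<close> dvd_imp_le_int unfolding S_def by blast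
qed

lemma sum_Legendre_shift: "(\<Sum>w\<in>{0..<p}. Legendre (w + A) p) = 0"
proof -
  have "(\<Sum>w\<in>{0..<p}. Legendre w p) = (\<Sum>w\<in>{0..<p}. Legendre ((1 * w + A) mod p) p)"
    by (rule sum_residues_affine_reindex) (fact not_dvd_one)
  thus ?thesis
    using sum_Legendre_residues by (simp add: Legendre_mod)
qed

lemma square_cong_iff: "[y ^ 2 = y0 ^ 2] (mod p) \<longleftrightarrow> [y = y0] (mod p) \<or> [y = - y0] (mod p)"
proof -
  have "[y ^ 2 = y0 ^ 2] (mod p) \<longleftrightarrow> p dvd (y - y0) * (y + y0)"
    by (simp add: cong_iff_dvd_diff power2_eq_square algebra_simps)
  also have "\<dots> \<longleftrightarrow> [y = y0] (mod p) \<or> [y = - y0] (mod p)"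
    using prime by (simp add: prime_dvd_mult_iff cong_iff_dvd_diff)
  finally show ?thesis .
qed

lemma card_square_roots: "int (card {y\<in>{0..<p}. [y ^ 2 = D] (mod p)}) = 1 + Legendre D p"
proof (cases "QuadRes p D")
  case True
  then obtain y0 where y0: "[y0 ^ 2 = D] (mod p)"
    unfolding QuadRes_def by blast
  have "[y ^ 2 = D] (mod p) \<longleftrightarrow> [y = y0] (mod p) \<or> [y = - y0] (mod p)" for y
    using y0 square_cong_iff[of y y0] cong_sym cong_trans by blast
  moreover have "y \<in> {0..<p} \<Longrightarrow> [y = a] (mod p) \<longleftrightarrow> y = a mod p" for y a
    by (simp add: cong_def)
  ultimately have roots: "{y\<in>{0..<p}. [y ^ 2 = D] (mod p)} = {y0 mod p, (- y0) mod p}"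
    using p_gt_2 by auto
  have "y0 mod p = (- y0) mod p \<longleftrightarrow> p dvd 2 * y0"
    unfolding cong_def[symmetric] cong_iff_dvd_diff by simp
  also have "\<dots> \<longleftrightarrow> p dvd y0 ^ 2"
    using prime not_dvd_2 by (simp add: prime_dvd_mult_iff prime_dvd_power_iff)
  also have "\<dots> \<longleftrightarrow> p dvd D"
    using y0 by (rule cong_dvd_iff)
  finally show ?thesis
    unfolding roots Legendre_def using True by (auto simp: cong_0_iff)
next
  case False
  hence "\<not> [0 ^ 2 = D] (mod p)"
    unfolding QuadRes_def by blast
  hence "\<not> p dvd D"
    by (simp add: cong_0_iff cong_sym_eq)
  moreover have no_roots: "{y\<in>{0..<p}. [y ^ 2 = D] (mod p)} = {}"
    using False unfolding QuadRes_def by blast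
  ultimately show ?thesis
    unfolding no_roots Legendre_def using False by (simp add: cong_0_iff)
qed

lemma count_square_roots:
  "(\<Sum>y\<in>{0..<p}. if [y ^ 2 = D] (mod p) then 1 else 0) = 1 + Legendre D p"
  using card_square_roots[of D] by (simp add: sum.inter_filter[symmetric])

lemma count_quadratic_roots:
  "(\<Sum>z\<in>{0..<p}. if [z ^ 2 - w * z + B = 0] (mod p) then 1 else 0) = 1 + Legendre (w ^ 2 - 4 * B) p"
proof -
  text \<open>Complete the square: \<open>(2z - w)^2 - (w^2 - 4B) = 4 (z^2 - wz + B)\<close>, and \<open>p \<nmid> 4\<close>.\<close>
  have "[z ^ 2 - w * z + B = 0] (mod p) \<longleftrightarrow> [((2 * z + - w) mod p) ^ 2 = w ^ 2 - 4 * B] (mod p)" for z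
  proof -
    have "[((2 * z + - w) mod p) ^ 2 = w ^ 2 - 4 * B] (mod p) \<longleftrightarrow> [(2 * z - w) ^ 2 = w ^ 2 - 4 * B] (mod p)"
      by (simp add: cong_def power_mod)
    also have "\<dots> \<longleftrightarrow> p dvd 4 * (z ^ 2 - w * z + B)"
    proof -
      have "(2 * z - w) ^ 2 - (w ^ 2 - 4 * B) = 4 * (z ^ 2 - w * z + B)"
        by (simp add: algebra_simps power2_eq_square)
      thus ?thesis
        by (simp only: cong_iff_dvd_diff)
    qed
    also have "\<dots> \<longleftrightarrow> [z ^ 2 - w * z + B = 0] (mod p)"
      using prime not_dvd_4 by (simp only: prime_dvd_mult_iff cong_0_iff simp_thms)
    finally show ?thesis ..
  qed
  hence "(\<Sum>z\<in>{0..<p}. if [z ^ 2 - w * z + B = 0] (mod p) then 1 else (0::int))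
      = (\<Sum>z\<in>{0..<p}. if [((2 * z + - w) mod p) ^ 2 = w ^ 2 - 4 * B] (mod p) then 1 else 0)"
    by simp
  also have "\<dots> = (\<Sum>y\<in>{0..<p}. if [y ^ 2 = w ^ 2 - 4 * B] (mod p) then 1 else 0)"
    by (rule sum_residues_affine_reindex[symmetric]) (fact not_dvd_2)
  finally show ?thesis
    unfolding count_square_roots .
qed

lemma sum_residues_if_cong:
  "(\<Sum>w\<in>{0..<p}. if [w = c] (mod p) then f w else 0) = f (c mod p)"
proof -
  have "w \<in> {0..<p} \<Longrightarrow> [w = c] (mod p) \<longleftrightarrow> w = c mod p" for w
    by (simp add: cong_def)
  hence "(\<Sum>w\<in>{0..<p}. if [w = c] (mod p) then f w else 0) = (\<Sum>w\<in>{0..<p}. if w = c mod p then f w else 0)"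
    by (intro sum.cong) auto
  thus ?thesis
    using p_gt_2 by simp
qed

lemma quadratic_cong_iff:
  assumes "[z * z' = 1] (mod p)"
  shows "[z ^ 2 - w * z + B = 0] (mod p) \<longleftrightarrow> [w = z + B * z'] (mod p)"
proof -
  obtain k where k: "z * z' = 1 + p * k"
    using assms by (metis cong_iff_lin cong_sym)
  define Q where "Q = z ^ 2 - w * z + B"
  define R where "R = z + B * z' - w"
  have "z' * Q = R + p * (k * (z - w))" "z * R = Q + p * (B * k)"
    unfolding Q_def R_def using k by (simp_all add: algebra_simps power2_eq_square)
  hence "p dvd Q \<longleftrightarrow> p dvd R"
    by (metis dvd_add_left_iff dvd_mult dvd_mult2 dvd_triv_left)
  moreover have "p dvd R \<longleftrightarrow> [w = z + B * z'] (mod p)"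
    unfolding R_def by (simp add: cong_iff_dvd_diff dvd_diff_commute)
  ultimately show ?thesis
    unfolding Q_def by (simp add: cong_0_iff)
qed

lemma Legendre_cubic_eq:
  assumes "[z * z' = 1] (mod p)"
  shows "Legendre (z * (z ^ 2 + A * z + B)) p = Legendre (z + A + B * z') p"
proof -
  obtain k where k: "z * z' = 1 + p * k"
    using assms by (metis cong_iff_lin cong_sym)
  have "z * z * (z + A + B * z') = z * (z ^ 2 + A * z + B) + p * (B * z * k)"
    using k by (simp add: algebra_simps power2_eq_square)
  hence "[z * (z ^ 2 + A * z + B) = z * z * (z + A + B * z')] (mod p)"
    by (simp add: cong_iff_dvd_diff)
  thus ?thesis
    using Legendre_cong Legendre_square_mult not_dvd_if_inverse[OF assms] by simp
qed

lemma cubic_character_sum_shift: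
  "cubic_character_sum (- 2 * A) (A ^ 2 - 4 * B) = (\<Sum>w\<in>{0..<p}. Legendre (w + A) p * Legendre (w ^ 2 - 4 * B) p)"
proof -
  have "cubic_character_sum (- 2 * A) (A ^ 2 - 4 * B)
      = (\<Sum>w\<in>{0..<p}. Legendre ((1 * w + A) mod p * (((1 * w + A) mod p) ^ 2 + - 2 * A * ((1 * w + A) mod p) + (A ^ 2 - 4 * B))) p)"
    unfolding cubic_character_sum_def by (rule sum_residues_affine_reindex) (fact not_dvd_one)
  also have "\<dots> = (\<Sum>w\<in>{0..<p}. Legendre (w + A) p * Legendre (w ^ 2 - 4 * B) p)"
  proof (intro sum.cong refl)
    fix w
    have "[(1 * w + A) mod p * (((1 * w + A) mod p) ^ 2 + - 2 * A * ((1 * w + A) mod p) + (A ^ 2 - 4 * B))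
        = (w + A) * ((w + A) ^ 2 + - 2 * A * (w + A) + (A ^ 2 - 4 * B))] (mod p)"
      by (intro cong_mult cong_add cong_pow cong_refl) (simp_all add: cong_def)
    also have "(w + A) * ((w + A) ^ 2 + - 2 * A * (w + A) + (A ^ 2 - 4 * B)) = (w + A) * (w ^ 2 - 4 * B)"
      by (simp add: algebra_simps power2_eq_square)
    finally show "Legendre ((1 * w + A) mod p * (((1 * w + A) mod p) ^ 2 + - 2 * A * ((1 * w + A) mod p) + (A ^ 2 - 4 * B))) p
        = Legendre (w + A) p * Legendre (w ^ 2 - 4 * B) p"
      unfolding Legendre_mult[symmetric] by (rule Legendre_cong)
  qed
  finally show ?thesis .
qed

text \<open>
  Both sides equal \<open>\<Sum>\<^sub>z\<^sub>\<noteq>\<^sub>0 ((z + A + B/z)/p)\<close>: on the right, \<open>1 + ((w^2 - 4B)/p)\<close> counts the roots \<open>z\<close>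
  of \<open>z^2 - wz + B\<close>, and every \<open>z \<noteq> 0\<close> is a root for exactly one \<open>w\<close>, namely \<open>w = z + B/z\<close>.
\<close>

theorem cubic_character_sum_isogeny:
  assumes "\<not> p dvd B"
  shows "cubic_character_sum A B = cubic_character_sum (- 2 * A) (A ^ 2 - 4 * B)"
proof -
  have "\<forall>z\<in>{1..<p}. \<exists>z'. [z * z' = 1] (mod p)"
    using exists_inverse_mod zdvd_not_zless by simp
  then obtain recip where recip: "\<And>z. z \<in> {1..<p} \<Longrightarrow> [z * recip z = 1] (mod p)"
    using bchoice[of "{1..<p}" "\<lambda>z z'. [z * z' = 1] (mod p)"] by blast
  define Q where "Q w z \<longleftrightarrow> [z ^ 2 - w * z + B = 0] (mod p)" for w z
  have "cubic_character_sum (- 2 * A) (A ^ 2 - 4 * B)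
      = (\<Sum>w\<in>{0..<p}. Legendre (w + A) p * Legendre (w ^ 2 - 4 * B) p)"
    by (rule cubic_character_sum_shift)
  also have "\<dots> = (\<Sum>w\<in>{0..<p}. Legendre (w + A) p * (1 + Legendre (w ^ 2 - 4 * B) p))"
    using sum_Legendre_shift[of A] by (simp add: algebra_simps sum.distrib)
  also have "\<dots> = (\<Sum>w\<in>{0..<p}. \<Sum>z\<in>{0..<p}. if Q w z then Legendre (w + A) p else 0)"
    unfolding count_quadratic_roots[symmetric] Q_def sum_distrib_left by (intro sum.cong refl) simp
  also have "\<dots> = (\<Sum>z\<in>{0..<p}. \<Sum>w\<in>{0..<p}. if Q w z then Legendre (w + A) p else 0)"
    by (rule sum.swap)
  also have "\<dots> = (\<Sum>z\<in>{1..<p}. Legendre (z + A + B * recip z) p)"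
  proof -
    have "\<not> Q w 0" for w
      using assms unfolding Q_def by (simp add: cong_0_iff)
    moreover have "(\<Sum>w\<in>{0..<p}. if Q w z then Legendre (w + A) p else 0) = Legendre (z + A + B * recip z) p"
      if "z \<in> {1..<p}" for z
    proof -
      have "(\<Sum>w\<in>{0..<p}. if Q w z then Legendre (w + A) p else 0)
          = (\<Sum>w\<in>{0..<p}. if [w = z + B * recip z] (mod p) then Legendre (w + A) p else 0)"
        unfolding Q_def quadratic_cong_iff[OF recip[OF that]] ..
      also have "\<dots> = Legendre ((z + B * recip z) mod p + A) p"
        by (rule sum_residues_if_cong)
      also have "\<dots> = Legendre (z + B * recip z + A) p"
        by (rule Legendre_cong) (simp add: cong_def mod_add_left_eq)
      also have "\<dots> = Legendre (z + A + B * recip z) p"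
        by (simp add: ac_simps)
      finally show ?thesis .
    qed
    ultimately show ?thesis
      unfolding residues_split_0 by simp
  qed
  also have "\<dots> = cubic_character_sum A B"
    unfolding cubic_character_sum_def residues_split_0
    using Legendre_cubic_eq[OF recip] Legendre_eq_0_iff[of 0] by simp
  finally show ?thesis ..
qed

section \<open>The two sides of the congruence\<close>

lemma cong_uminus_swap: "[a = - b] (mod m) \<Longrightarrow> [b = - a] (mod m)" for a b m :: int
  by (metis cong_minus_minus_iff cong_sym minus_minus)

lemma sum_binomial_squares_cong:
  "[(\<Sum>k\<le>n. int (n choose k) ^ 2 * c ^ (2 * k)) = - cubic_character_sum (1 + c ^ 2) (c ^ 2)] (mod p)"
proof -
  define g where "g = [:1, 1:] * [:c ^ 2, 1:]"
  have "cubic_character_sum (1 + c ^ 2) (c ^ 2) = (\<Sum>z\<in>{0..<p}. Legendre (z * poly g z) p)"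
    unfolding cubic_character_sum_def g_def by (intro sum.cong refl) (simp add: algebra_simps power2_eq_square)
  moreover have "[(\<Sum>z\<in>{0..<p}. Legendre (z * poly g z) p) = - coeff (g ^ n) n] (mod p)"
    by (rule sum_Legendre_cong_coeff_power) (simp add: g_def)
  moreover have "coeff (g ^ n) n = (\<Sum>k\<le>n. int (n choose k) ^ 2 * c ^ (2 * k))"
    unfolding g_def coeff_binomial_square_poly by (simp add: power_mult)
  ultimately show ?thesis
    using cong_uminus_swap by simp
qed

lemma reduces_mod_central_binomial_sum:
  assumes x: "reduces_mod p x c"
  shows "reduces_mod p (\<Sum>k = 0..n. of_nat (2 * k choose k) ^ 2 * (x / 4) ^ (2 * k))
           (- cubic_character_sum (1 + c ^ 2) (c ^ 2))"
proof -
  obtain q where q: "[4 * q = 1] (mod p)"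
    using exists_inverse_mod not_dvd_4 by blast
  have "reduces_mod p (x / 4) (c * q)"
    unfolding divide_inverse using x reduces_mod_inverse[OF reduces_mod_numeral q]
    by (rule reduces_mod_mult)
  hence "reduces_mod p (\<Sum>k = 0..n. of_nat (2 * k choose k) ^ 2 * (x / 4) ^ (2 * k))
           (\<Sum>k = 0..n. int (2 * k choose k) ^ 2 * (c * q) ^ (2 * k))"
    by (intro reduces_mod_sum reduces_mod_mult reduces_mod_power reduces_mod_of_nat)
  moreover have "[(\<Sum>k = 0..n. int (2 * k choose k) ^ 2 * (c * q) ^ (2 * k))
      = (\<Sum>k\<le>n. int (n choose k) ^ 2 * c ^ (2 * k))] (mod p)"
    unfolding atMost_atLeast0
  proof (rule cong_sum)
    fix k assume "k \<in> {0..n}"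
    hence "[int (2 * k choose k) ^ 2 * (c * q) ^ (2 * k) = ((-4) ^ k * int (n choose k)) ^ 2 * (c * q) ^ (2 * k)] (mod p)"
      using central_binomial_cong[of k] by (intro cong_mult cong_pow cong_refl) auto
    also have "((-4) ^ k * int (n choose k)) ^ 2 * (c * q) ^ (2 * k) = int (n choose k) ^ 2 * c ^ (2 * k) * (4 * q) ^ (2 * k)"
    proof -
      have "((-4::int) ^ k) ^ 2 = 4 ^ (2 * k)"
        by (simp add: power_mult[symmetric] mult.commute)
      thus ?thesis
        by (simp add: power_mult_distrib algebra_simps)
    qed
    also have "[\<dots> = int (n choose k) ^ 2 * c ^ (2 * k) * 1 ^ (2 * k)] (mod p)"
      using q by (intro cong_mult cong_pow cong_refl)
    finally show "[int (2 * k choose k) ^ 2 * (c * q) ^ (2 * k) = int (n choose k) ^ 2 * c ^ (2 * k)] (mod p)"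
      by simp
  qed
  ultimately show ?thesis
    by (intro reduces_mod_cong[OF _ cong_trans[OF _ sum_binomial_squares_cong]])
qed

lemma scaled_legendre_cong:
  "[scaled_legendre n T = - (\<Sum>s\<in>{0..<p}. Legendre (s * ((s + T) ^ 2 - 1)) p)] (mod p)"
proof -
  define g where "g = [:T, 1:] ^ 2 - 1"
  have "[(\<Sum>s\<in>{0..<p}. Legendre (s * poly g s) p) = - coeff (g ^ n) n] (mod p)"
    by (rule sum_Legendre_cong_coeff_power) (simp add: g_def degree_diff_le degree_linear_power)
  moreover have "poly g s = (s + T) ^ 2 - 1" for s
    by (simp add: g_def add.commute)
  ultimately show ?thesis
    unfolding g_def coeff_scaled_legendre_poly using cong_uminus_swap by simp
qed

text \<open>The substitution \<open>s = l u\<close> turns \<open>s ((s + T)^2 - 1)\<close> into \<open>l^3 u (u^2 + A u + B)\<close>.\<close>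

lemma sum_Legendre_rescale:
  assumes l: "\<not> p dvd l" and A: "[2 * T = l * A] (mod p)" and B: "[T ^ 2 - 1 = l ^ 2 * B] (mod p)"
  shows "(\<Sum>s\<in>{0..<p}. Legendre (s * ((s + T) ^ 2 - 1)) p) = Legendre l p * cubic_character_sum A B"
proof -
  have "(\<Sum>s\<in>{0..<p}. Legendre (s * ((s + T) ^ 2 - 1)) p)
      = (\<Sum>u\<in>{0..<p}. Legendre ((l * u + 0) mod p * (((l * u + 0) mod p + T) ^ 2 - 1)) p)"
    using l by (rule sum_residues_affine_reindex)
  also have "\<dots> = (\<Sum>u\<in>{0..<p}. Legendre (l * l * (l * (u * (u ^ 2 + A * u + B)))) p)"
  proof (intro sum.cong refl Legendre_cong)
    fix u
    have "[(l * u + 0) mod p * (((l * u + 0) mod p + T) ^ 2 - 1) = l * u * ((l * u + T) ^ 2 - 1)] (mod p)"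
      by (intro cong_mult cong_diff cong_add cong_pow cong_refl) (simp_all add: cong_def)
    also have "l * u * ((l * u + T) ^ 2 - 1) = l * u * (l ^ 2 * u ^ 2 + (2 * T) * l * u + (T ^ 2 - 1))"
      by (simp add: algebra_simps power2_eq_square)
    also have "[l * u * (l ^ 2 * u ^ 2 + (2 * T) * l * u + (T ^ 2 - 1)) = l * u * (l ^ 2 * u ^ 2 + (l * A) * l * u + l ^ 2 * B)] (mod p)"
      by (intro cong_mult cong_add cong_refl A B)
    also have "l * u * (l ^ 2 * u ^ 2 + (l * A) * l * u + l ^ 2 * B) = l * l * (l * (u * (u ^ 2 + A * u + B)))"
      by (simp add: algebra_simps power2_eq_square)
    finally show "[(l * u + 0) mod p * (((l * u + 0) mod p + T) ^ 2 - 1) = l * l * (l * (u * (u ^ 2 + A * u + B)))] (mod p)" .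
  qed
  also have "\<dots> = (\<Sum>u\<in>{0..<p}. Legendre l p * Legendre (u * (u ^ 2 + A * u + B)) p)"
    using Legendre_square_mult[OF l] Legendre_mult[of l] by (simp only: mult.assoc)
  finally show ?thesis
    unfolding cubic_character_sum_def sum_distrib_left .
qed

text \<open>With \<open>t = (c + 1/c)/2\<close> and \<open>l = -1/(2c)\<close> one has \<open>2t = l A\<close> and \<open>t^2 - 1 = l^2 B\<close> for
  \<open>A = -2(1 + c^2)\<close>, \<open>B = (1 + c^2)^2 - 4c^2\<close>; these rational identities reduce modulo \<open>p\<close>.\<close>

lemma rescaling_parameters_cong:
  assumes ci: "[c * ci = 1] (mod p)" and h: "[2 * h = 1] (mod p)"
  defines "T \<equiv> (c + ci) * h" and "l \<equiv> - (ci * h)"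
  shows "\<not> p dvd l"
    and "[2 * T = l * (- 2 * (1 + c ^ 2))] (mod p)"
    and "[T ^ 2 - 1 = l ^ 2 * ((1 + c ^ 2) ^ 2 - 4 * c ^ 2)] (mod p)"
proof -
  define x :: rat where "x = of_int c"
  have x: "reduces_mod p x c"
    unfolding x_def by (rule reduces_mod_of_int)
  have "x \<noteq> 0"
    using not_dvd_if_inverse[OF ci] unfolding x_def by auto
  have xi: "reduces_mod p (inverse x) ci" and hi: "reduces_mod p (inverse 2) h"
    using reduces_mod_inverse[OF x ci] reduces_mod_inverse[OF reduces_mod_numeral h] by simp_all
  have t: "reduces_mod p ((x + inverse x) * inverse 2) T"
    unfolding T_def by (intro reduces_mod_mult reduces_mod_add x xi hi)
  have l: "reduces_mod p (- (inverse x * inverse 2)) l"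
    unfolding l_def by (intro reduces_mod_uminus reduces_mod_mult xi hi)
  have "reduces_mod p (- (inverse x * inverse 2) * (- 2 * x)) (l * (- 2 * c))"
    by (intro reduces_mod_mult reduces_mod_uminus l x reduces_mod_numeral)
  hence "[l * (- 2 * c) = 1] (mod p)"
    using reduces_mod_unique[OF _ reduces_mod_1] \<open>x \<noteq> 0\<close> by simp
  thus "\<not> p dvd l"
    by (rule not_dvd_if_inverse)
  have "reduces_mod p (- (inverse x * inverse 2) * (- 2 * (1 + x ^ 2))) (l * (- 2 * (1 + c ^ 2)))"
    by (intro reduces_mod_mult reduces_mod_uminus reduces_mod_add reduces_mod_power l x reduces_mod_numeral reduces_mod_1)
  moreover have "- (inverse x * inverse 2) * (- 2 * (1 + x ^ 2)) = 2 * ((x + inverse x) * inverse 2)"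
    using \<open>x \<noteq> 0\<close> by (simp add: field_simps power2_eq_square)
  ultimately show "[2 * T = l * (- 2 * (1 + c ^ 2))] (mod p)"
    using reduces_mod_unique reduces_mod_mult[OF reduces_mod_numeral t] by metis
  have "reduces_mod p ((- (inverse x * inverse 2)) ^ 2 * ((1 + x ^ 2) ^ 2 - 4 * x ^ 2)) (l ^ 2 * ((1 + c ^ 2) ^ 2 - 4 * c ^ 2))"
    by (intro reduces_mod_mult reduces_mod_diff reduces_mod_power reduces_mod_add l x reduces_mod_numeral reduces_mod_1)
  moreover have "(- (inverse x * inverse 2)) ^ 2 * ((1 + x ^ 2) ^ 2 - 4 * x ^ 2) = ((x + inverse x) * inverse 2) ^ 2 - 1"
    using \<open>x \<noteq> 0\<close> by (simp add: field_simps power2_eq_square)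
  ultimately show "[T ^ 2 - 1 = l ^ 2 * ((1 + c ^ 2) ^ 2 - 4 * c ^ 2)] (mod p)"
    using reduces_mod_unique reduces_mod_diff[OF reduces_mod_power[OF t] reduces_mod_1] by metis
qed

lemma Legendre_normalizing_factor:
  assumes ci: "[c * ci = 1] (mod p)" and h: "[2 * h = 1] (mod p)"
  shows "[Legendre (- c) p * h ^ n * Legendre (- (ci * h)) p = 1] (mod p)"
proof -
  have "[- c * - (ci * h) = h] (mod p)"
    using cong_scalar_right[OF ci, of h] by (simp add: mult.assoc)
  hence "Legendre (- c) p * Legendre (- (ci * h)) p = Legendre h p"
    unfolding Legendre_mult[symmetric] by (rule Legendre_cong)
  moreover have "[h ^ n * Legendre h p = h ^ n * h ^ n] (mod p)"
    using Legendre_cong_power by (rule cong_scalar_left)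
  moreover have "[h ^ n * h ^ n = 1] (mod p)"
  proof -
    have "h ^ n * h ^ n = h ^ (2 * n)"
      by (simp add: power_add[symmetric] mult_2)
    thus ?thesis
      using power_2n_cong_1[OF not_dvd_if_inverse[of h 2]] h by (simp add: mult.commute)
  qed
  ultimately show ?thesis
    by (metis (no_types, lifting) cong_trans mult.commute mult.left_commute)
qed

lemma reduces_mod_Legendre_polynomial_side:
  assumes x: "reduces_mod p x c" and c: "\<not> p dvd c"
  shows "reduces_mod p (of_int (qLegendre (- x) p) * legendreP n ((x + inverse x) / 2))
           (- cubic_character_sum (- 2 * (1 + c ^ 2)) ((1 + c ^ 2) ^ 2 - 4 * c ^ 2))"
proof -
  obtain ci where ci: "[c * ci = 1] (mod p)"
    using exists_inverse_mod c by blast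
  obtain h where h: "[2 * h = 1] (mod p)"
    using exists_inverse_mod not_dvd_2 by blast
  define T where "T = (c + ci) * h"
  define S where "S = cubic_character_sum (- 2 * (1 + c ^ 2)) ((1 + c ^ 2) ^ 2 - 4 * c ^ 2)"
  have "reduces_mod p ((x + inverse x) / 2) T"
    unfolding T_def divide_inverse
    by (intro reduces_mod_mult reduces_mod_add x reduces_mod_inverse[OF x ci] reduces_mod_inverse[OF reduces_mod_numeral h])
  hence "reduces_mod p (legendreP n ((x + inverse x) / 2)) (scaled_legendre n T * h ^ n)"
    unfolding legendreP_eq_scaled_legendre divide_inverse power_inverse[symmetric]
    by (intro reduces_mod_mult reduces_mod_scaled_legendre reduces_mod_power reduces_mod_inverse[OF reduces_mod_numeral h])
  moreover have "qLegendre (- x) p = Legendre (- c) p"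
    unfolding qLegendre_def qres_eq_mod[OF reduces_mod_uminus[OF x]] Legendre_mod ..
  ultimately have red: "reduces_mod p (of_int (qLegendre (- x) p) * legendreP n ((x + inverse x) / 2))
      (Legendre (- c) p * (scaled_legendre n T * h ^ n))"
    by (simp add: reduces_mod_mult reduces_mod_of_int)
  have "(\<Sum>s\<in>{0..<p}. Legendre (s * ((s + T) ^ 2 - 1)) p) = Legendre (- (ci * h)) p * S"
    unfolding T_def S_def by (rule sum_Legendre_rescale[OF rescaling_parameters_cong[OF ci h]])
  hence "[scaled_legendre n T = - (Legendre (- (ci * h)) p * S)] (mod p)"
    using scaled_legendre_cong[of T] by simp
  hence "[Legendre (- c) p * (scaled_legendre n T * h ^ n)
      = Legendre (- c) p * (- (Legendre (- (ci * h)) p * S) * h ^ n)] (mod p)"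
    by (intro cong_mult cong_refl)
  also have "Legendre (- c) p * (- (Legendre (- (ci * h)) p * S) * h ^ n)
      = - ((Legendre (- c) p * h ^ n * Legendre (- (ci * h)) p) * S)"
    by (simp add: algebra_simps)
  also have "[- ((Legendre (- c) p * h ^ n * Legendre (- (ci * h)) p) * S) = - (1 * S)] (mod p)"
    unfolding cong_minus_minus_iff using Legendre_normalizing_factor[OF ci h] by (rule cong_scalar_right)
  finally show ?thesis
    using reduces_mod_cong[OF red] unfolding S_def by simp
qed

end

theorem theorem2p8:
  fixes p :: int and x :: rat
  assumes "prime p" and "odd p" and "in_Zp p x" and "\<not> qcong x 0 p"
  shows "qcong (\<Sum>k = 0..nat ((p - 1) div 2). of_nat ((2*k) choose k) ^ 2 * (x / 4) ^ (2*k))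
               (of_int (qLegendre (- x) p) * legendreP (nat ((p - 1) div 2)) ((x + inverse x) / 2)) p"
proof -
  define n where "n = nat ((p - 1) div 2)"
  interpret odd_prime p n
    using assms(1,2) prime_gt_0_int[OF assms(1)] by unfold_locales (auto simp: n_def elim!: oddE)
  obtain c where x: "reduces_mod p x c"
    using assms(3) in_Zp_iff_reduces_mod by blast
  have c: "\<not> p dvd c"
    using assms(4) qcong_if_reduces_mod[OF x reduces_mod_0] by (auto simp: cong_0_iff)
  hence "\<not> p dvd c ^ 2"
    using prime by (simp add: prime_dvd_power_iff)
  hence "cubic_character_sum (1 + c ^ 2) (c ^ 2) = cubic_character_sum (- 2 * (1 + c ^ 2)) ((1 + c ^ 2) ^ 2 - 4 * c ^ 2)"
    by (rule cubic_character_sum_isogeny)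
  thus ?thesis
    using qcong_if_reduces_mod[OF reduces_mod_central_binomial_sum[OF x] reduces_mod_Legendre_polynomial_side[OF x c]]
    unfolding n_def by simp
qed

end
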